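(* Assume $\mathcal N''(s)\le0$ for $s\in[0,1]$. Let $0\le c<1$ and $\Lambda\in\mathbb C$ with $\operatorname{Re}\Lambda>0$. Let $r_0$ solve $r_0'=r_0\mathcal N(r_0^2)$, $r_0(0)=\frac12$, and set $\mathcal N_0=\mathcal N(r_0^2)$, $\mathcal N_p=\mathcal N'(r_0^2)r_0^2$, $F=\mathcal N_0+\mathcal N_p$ and $f=2c\mathcal N_p$ (functions of $X\in\mathbb R$). If $V\in L^2(\mathbb R)$ satisfies $$V_{XX}=(F^2-F_X)V+\Lambda(\Lambda-f)V,$$ then $V\equiv0$.
   Context: Nonlinearity: $\mathcal N:[0,\infty)\to\mathbb R$ is smooth, $\mathcal N'(s)<0$ for $s>0$, $\mathcal N(0)=1$, $\mathcal N(1)=0$, $\lim_{s\to\infty}\mathcal N(s)\in[-\infty,0)$. The function $r_0$ increases from $0$ at $X=-\infty$ to $1$ at $X=+\infty$. *)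

theory Defs
  imports "HOL-Analysis.Analysis"
begin

end

theory Submission
  imports Defs
begin

text \<open>
  Put \<open>W = V' + F V\<close>; the equation becomes \<open>W' = F W + \<Lambda> (\<Lambda> - f) V\<close>, and
  \<open>g = Re (\<Lambda>\<^sup>* V\<^sup>* W)\<close> satisfies \<open>g' = Re \<Lambda> |W|\<^sup>2 + |\<Lambda>|\<^sup>2 (Re \<Lambda> - f) |V|\<^sup>2 \<ge> 0\<close>
  because \<open>f = 2 c N\<^sub>p \<le> 0\<close>. Cauchy-Schwarz gives \<open>g\<^sup>2 \<le> C |V|\<^sup>2 g'\<close>, so wherever \<open>g > 0\<close>
  the function \<open>1/g\<close> decreases at rate at least \<open>1 / (C |V|\<^sup>2)\<close>; as \<open>|V|\<^sup>2\<close> is integrable this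
  is impossible on a half-line. Hence \<open>g = 0\<close>, so \<open>g' = 0\<close> and \<open>V = 0\<close>.
\<close>

lemma two_minus_le_of_square_le:
  fixes a d v C :: real
  assumes "0 < a" "0 < C" "0 \<le> d" "a^2 \<le> C * v * d"
  shows "2 - C * d / a^2 \<le> v"
proof -
  have "0 < C * v * d"
    using assms(1,4) by (smt (verit) zero_less_power)
  then have v: "0 < v" and "0 < d"
    using assms(2,3) by (auto simp: zero_less_mult_iff)
  then have "1 / v \<le> C * d / a^2"
    using assms by (simp add: field_simps)
  moreover have "2 \<le> v + 1 / v"
  proof -
    have "0 \<le> (v - 1)^2" by simp
    then show ?thesis using v by (simp add: field_simps power2_eq_square)
  qed
  ultimately show ?thesis by linarith
qed

lemma nondecreasing_energy_nonpos:
  fixes g g' v :: "real \<Rightarrow> real"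
  assumes g_deriv: "\<And>t. (g has_real_derivative g' t) (at t)"
    and g'_nonneg: "\<And>t. 0 \<le> g' t"
    and bound: "\<And>t. (g t)^2 \<le> C * v t * g' t"
    and C: "0 < C"
    and v_cont: "continuous_on UNIV v"
    and v_int: "\<And>a b. integral {a..b} v \<le> B"
  shows "g t \<le> 0"
proof (rule ccontr)
  assume "\<not> g t \<le> 0"
  then have gt: "0 < g t" by simp
  have g_pos: "0 < g s" if "t \<le> s" for s
    using DERIV_nonneg_imp_nondecreasing[OF that] g_deriv g'_nonneg gt by (smt (verit))
  txt \<open>On \<open>[t, T]\<close> the derivative \<open>2 - C g' / g\<^sup>2\<close> of \<open>2 s + C / g s\<close> is at most \<open>v\<close> by AM-GM,
    so \<open>2 (T - t) < B + C / g t\<close>, which fails for this \<open>T\<close>.\<close>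
  define T where "T = t + \<bar>B\<bar> + C / g t + 1"
  have "t \<le> T"
    using C gt by (simp add: T_def)
  have FTC: "((\<lambda>s. 2 - C * g' s / (g s)^2) has_integral
      (2 * T + C / g T) - (2 * t + C / g t)) {t..T}"
  proof (rule fundamental_theorem_of_calculus[OF \<open>t \<le> T\<close>])
    fix s assume "s \<in> {t..T}"
    then have "g s \<noteq> 0" using g_pos by force
    then have "((\<lambda>s. 2 * s + C / g s) has_real_derivative 2 - C * g' s / (g s)^2) (at s)"
      by (auto intro!: derivative_eq_intros g_deriv simp: power2_eq_square field_simps)
    then show "((\<lambda>s. 2 * s + C / g s) has_vector_derivative 2 - C * g' s / (g s)^2)
        (at s within {t..T})"
      by (simp add: has_real_derivative_iff_has_vector_derivative has_vector_derivative_at_within)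
  qed
  have "integral {t..T} (\<lambda>s. 2 - C * g' s / (g s)^2) \<le> integral {t..T} v"
    using g_pos bound g'_nonneg C
    by (intro integral_le has_integral_integrable[OF FTC] integrable_continuous_interval
          continuous_on_subset[OF v_cont])
       (auto intro!: two_minus_le_of_square_le)
  then have "(2 * T + C / g T) - (2 * t + C / g t) \<le> B"
    using v_int[of t T] integral_unique[OF FTC] by linarith
  moreover have "0 < C / g T" "0 < C / g t"
    using g_pos[OF \<open>t \<le> T\<close>] gt C by simp_all
  moreover have "T - t = \<bar>B\<bar> + C / g t + 1"
    by (simp add: T_def)
  ultimately show False
    using abs_ge_self[of B] abs_ge_zero[of B] by linarith
qed

lemma nondecreasing_energy_eq_0:
  fixes g g' v :: "real \<Rightarrow> real"
  assumes g_deriv: "\<And>t. (g has_real_derivative g' t) (at t)"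
    and g'_nonneg: "\<And>t. 0 \<le> g' t"
    and bound: "\<And>t. (g t)^2 \<le> C * v t * g' t"
    and C: "0 < C"
    and v_cont: "continuous_on UNIV v"
    and v_int: "\<And>a b. integral {a..b} v \<le> B"
  shows "g t = 0"
proof -
  have "- g (- s) \<le> 0" for s
  proof (rule nondecreasing_energy_nonpos[where g = "\<lambda>s. - g (- s)"
        and g' = "\<lambda>s. g' (- s)" and v = "\<lambda>s. v (- s)"])
    fix s
    show "((\<lambda>s. - g (- s)) has_real_derivative g' (- s)) (at s)"
      using DERIV_minus[OF iffD1[OF DERIV_mirror g_deriv[of "- s"]]] by simp
    show "(- g (- s))^2 \<le> C * v (- s) * g' (- s)"
      using bound[of "- s"] by simp
  next
    show "continuous_on UNIV (\<lambda>s. v (- s))"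
      by (rule continuous_on_compose2[OF v_cont]) (auto intro!: continuous_intros)
  next
    fix a b :: real
    show "integral {a..b} (\<lambda>s. v (- s)) \<le> B"
      using Henstock_Kurzweil_Integration.integral_reflect_real[of "- a" "- b" v] v_int[of "- b" "- a"]
      by simp
  qed (use g'_nonneg C in auto)
  from this[of "- t"] show ?thesis
    using nondecreasing_energy_nonpos[OF assms, of t] by simp
qed

lemma nondecreasing_energy_derivative_eq_0:
  fixes g g' v :: "real \<Rightarrow> real"
  assumes g_deriv: "\<And>t. (g has_real_derivative g' t) (at t)"
    and "\<And>t. 0 \<le> g' t"
    and "\<And>t. (g t)^2 \<le> C * v t * g' t"
    and "0 < C"
    and "continuous_on UNIV v"
    and "\<And>a b. integral {a..b} v \<le> B"
  shows "g' t = 0"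
proof -
  have "g = (\<lambda>_. 0)"
    using nondecreasing_energy_eq_0[OF assms] by blast
  then have "((\<lambda>_. 0) has_real_derivative g' t) (at t)"
    using g_deriv[of t] by simp
  then show ?thesis
    using DERIV_const DERIV_unique by blast
qed

lemma Re_cnj_mult_square_le:
  fixes a b c :: complex
  shows "(Re (cnj a * (cnj b * c)))^2 \<le> (cmod a)^2 * (cmod b)^2 * (cmod c)^2"
proof -
  have "(Re (cnj a * (cnj b * c)))^2 \<le> (cmod (cnj a * (cnj b * c)))^2"
    by (simp add: cmod_power2)
  then show ?thesis
    by (simp add: norm_mult power_mult_distrib)
qed

lemma integral_atLeastAtMost_le_lebesgue_integral:
  fixes h :: "real \<Rightarrow> real"
  assumes h: "integrable lborel h" and h_nonneg: "\<And>x. 0 \<le> h x"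
  shows "integral {a..b} h \<le> integral\<^sup>L lborel h"
proof -
  have h_on: "set_integrable lborel {a..b} h"
    unfolding set_integrable_def by (rule integrable_mult_indicator[OF _ h]) simp
  have "integral {a..b} h = (LINT x:{a..b}|lborel. h x)"
    using set_borel_integral_eq_integral(2)[OF h_on] by simp
  also have "\<dots> \<le> integral\<^sup>L lborel h"
    unfolding set_lebesgue_integral_def
    by (rule integral_mono[OF h_on[unfolded set_integrable_def] h])
       (auto simp: h_nonneg split: split_indicator)
  finally show ?thesis .
qed

lemma has_vector_derivative_cnj_mult_factored:
  fixes V W :: "real \<Rightarrow> complex" and F :: real and \<mu> :: complex
  assumes "(V has_vector_derivative W t - of_real F * V t) (at t)"
    and "(W has_vector_derivative of_real F * W t + \<mu> * V t) (at t)"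
  shows "((\<lambda>s. cnj (V s) * W s) has_vector_derivative
           of_real ((cmod (W t))^2) + \<mu> * of_real ((cmod (V t))^2)) (at t)"
proof -
  have "((\<lambda>s. cnj (V s) * W s) has_vector_derivative
      cnj (V t) * (of_real F * W t + \<mu> * V t) + cnj (W t - of_real F * V t) * W t) (at t)"
    by (intro has_vector_derivative_mult has_vector_derivative_cnj assms)
  also have "cnj (V t) * (of_real F * W t + \<mu> * V t) + cnj (W t - of_real F * V t) * W t
      = of_real ((cmod (W t))^2) + \<mu> * of_real ((cmod (V t))^2)"
    unfolding complex_norm_square by (simp add: algebra_simps)
  finally show ?thesis .
qed

lemma has_real_derivative_Re_cnj_mult_factored:
  fixes V W :: "real \<Rightarrow> complex" and F r :: real and \<Lambda> :: complex
  assumes "(V has_vector_derivative W t - of_real F * V t) (at t)"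
    and "(W has_vector_derivative of_real F * W t + \<Lambda> * (\<Lambda> - of_real r) * V t) (at t)"
  shows "((\<lambda>s. Re (cnj \<Lambda> * (cnj (V s) * W s))) has_real_derivative
           Re \<Lambda> * (cmod (W t))^2 + (cmod \<Lambda>)^2 * (Re \<Lambda> - r) * (cmod (V t))^2) (at t)"
proof -
  have Re_cnj_\<Lambda>: "Re (cnj \<Lambda> * (of_real a + \<Lambda> * (\<Lambda> - of_real r) * of_real b))
      = Re \<Lambda> * a + (cmod \<Lambda>)^2 * (Re \<Lambda> - r) * b" for a b
    unfolding cmod_power2 by (simp add: algebra_simps power2_eq_square)
  have "((\<lambda>s. cnj \<Lambda> * (cnj (V s) * W s)) has_vector_derivative
      cnj \<Lambda> * (of_real ((cmod (W t))^2) + \<Lambda> * (\<Lambda> - of_real r) * of_real ((cmod (V t))^2)))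
      (at t)"
    by (intro has_vector_derivative_mult_right has_vector_derivative_cnj_mult_factored[OF assms])
  from bounded_linear.has_vector_derivative[OF bounded_linear_Re this]
  show ?thesis
    unfolding has_real_derivative_iff_has_vector_derivative Re_cnj_\<Lambda> .
qed

lemma factored_system_L2_solution_eq_0:
  fixes V W :: "real \<Rightarrow> complex" and F f :: "real \<Rightarrow> real" and \<Lambda> :: complex
  assumes V': "\<And>t. (V has_vector_derivative W t - of_real (F t) * V t) (at t)"
    and W': "\<And>t. (W has_vector_derivative
               of_real (F t) * W t + \<Lambda> * (\<Lambda> - of_real (f t)) * V t) (at t)"
    and f_nonpos: "\<And>t. f t \<le> 0"
    and \<Lambda>: "0 < Re \<Lambda>"
    and V_L2: "integrable lborel (\<lambda>t. (cmod (V t))^2)"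
  shows "V t = 0"
proof -
  define g where "g = (\<lambda>s. Re (cnj \<Lambda> * (cnj (V s) * W s)))"
  define g' where
    "g' = (\<lambda>s. Re \<Lambda> * (cmod (W s))^2 + (cmod \<Lambda>)^2 * (Re \<Lambda> - f s) * (cmod (V s))^2)"
  have g_deriv: "(g has_real_derivative g' s) (at s)" for s
    unfolding g_def g'_def by (rule has_real_derivative_Re_cnj_mult_factored[OF V' W'])
  have g'_W: "Re \<Lambda> * (cmod (W s))^2 \<le> g' s" for s
    using f_nonpos[of s] \<Lambda> by (simp add: g'_def)
  have g'_V: "(cmod \<Lambda>)^2 * Re \<Lambda> * (cmod (V s))^2 \<le> g' s" for s
  proof -
    have "(cmod \<Lambda>)^2 * Re \<Lambda> * (cmod (V s))^2 \<le> (cmod \<Lambda>)^2 * (Re \<Lambda> - f s) * (cmod (V s))^2"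
      using f_nonpos[of s] by (intro mult_right_mono mult_left_mono) auto
    moreover have "0 \<le> Re \<Lambda> * (cmod (W s))^2"
      using \<Lambda> by simp
    ultimately show ?thesis
      unfolding g'_def by linarith
  qed
  have g'_nonneg: "0 \<le> g' s" for s
    using g'_W[of s] \<Lambda> by (meson order_trans mult_nonneg_nonneg less_imp_le zero_le_power2)
  have "0 < cmod \<Lambda>"
    using \<Lambda> by auto
  then have C: "0 < (cmod \<Lambda>)^2 / Re \<Lambda>"
    using \<Lambda> by simp
  have bound: "(g s)^2 \<le> ((cmod \<Lambda>)^2 / Re \<Lambda>) * (cmod (V s))^2 * g' s" for s
  proof -
    have "(g s)^2 \<le> (cmod \<Lambda>)^2 * (cmod (V s))^2 * (cmod (W s))^2"
      unfolding g_def by (rule Re_cnj_mult_square_le)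
    also have "\<dots> \<le> (cmod \<Lambda>)^2 * (cmod (V s))^2 * (g' s / Re \<Lambda>)"
      using g'_W[of s] \<Lambda> by (intro mult_left_mono) (auto simp: field_simps)
    finally show ?thesis by simp
  qed
  have "continuous_on UNIV V"
    using V' by (intro continuous_on_vector_derivative) (auto intro: has_vector_derivative_at_within)
  then have V2_cont: "continuous_on UNIV (\<lambda>s. (cmod (V s))^2)"
    by (intro continuous_intros)
  have "g' t = 0"
    by (rule nondecreasing_energy_derivative_eq_0[OF g_deriv g'_nonneg bound C V2_cont])
       (rule integral_atLeastAtMost_le_lebesgue_integral[OF V_L2], simp)
  then have "(cmod \<Lambda>)^2 * Re \<Lambda> * (cmod (V t))^2 \<le> 0"
    using g'_V[of t] by simp
  then show "V t = 0"
    using \<Lambda> \<open>0 < cmod \<Lambda>\<close> by (simp add: mult_le_0_iff)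
qed

lemma has_real_derivative_comp_square:
  fixes h u :: "real \<Rightarrow> real"
  assumes h: "(h has_real_derivative h') (at ((u x)^2) within {0..})"
    and u: "(u has_real_derivative u') (at x)"
  shows "((\<lambda>y. h ((u y)^2)) has_real_derivative h' * (2 * u x * u')) (at x)"
proof -
  have "((\<lambda>y. (u y)^2) has_real_derivative 2 * u x * u') (at x)"
    using DERIV_mult[OF u u] by (simp add: power2_eq_square algebra_simps)
  moreover have "(h has_real_derivative h') (at ((u x)^2) within range (\<lambda>y. (u y)^2))"
    by (rule has_field_derivative_subset[OF h]) auto
  ultimately show ?thesis
    using DERIV_image_chain by (fastforce simp: o_def)
qed

text \<open>The substitution \<open>W = V' + F V\<close> factors \<open>V'' - (F\<^sup>2 - F') V\<close> as \<open>W' - F W\<close>.\<close>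

lemma second_order_L2_solution_eq_0:
  fixes V V1 V2 :: "real \<Rightarrow> complex" and F f :: "real \<Rightarrow> real" and \<Lambda> :: complex
  assumes V1: "\<And>t. (V has_vector_derivative V1 t) (at t)"
    and V2: "\<And>t. (V1 has_vector_derivative V2 t) (at t)"
    and F: "\<And>t. (F has_real_derivative F' t) (at t)"
    and equation: "\<And>t. V2 t = (of_real ((F t)^2 - F' t) + \<Lambda> * (\<Lambda> - of_real (f t))) * V t"
    and f_nonpos: "\<And>t. f t \<le> 0"
    and \<Lambda>: "0 < Re \<Lambda>"
    and V_L2: "integrable lborel (\<lambda>t. (cmod (V t))^2)"
  shows "V t = 0"
proof (rule factored_system_L2_solution_eq_0[OF _ _ f_nonpos \<Lambda> V_L2])
  define W where "W = (\<lambda>s. V1 s + of_real (F s) * V s)"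
  fix s
  show "(V has_vector_derivative W s - of_real (F s) * V s) (at s)"
    using V1[of s] by (simp add: W_def)
  have "(W has_vector_derivative V2 s + (of_real (F s) * V1 s + of_real (F' s) * V s)) (at s)"
    unfolding W_def
    by (intro has_vector_derivative_add V2 has_vector_derivative_mult V1
        has_vector_derivative_of_real F)
  then show "(W has_vector_derivative
      of_real (F s) * W s + \<Lambda> * (\<Lambda> - of_real (f s)) * V s) (at s)"
    unfolding equation W_def by (simp add: algebra_simps power2_eq_square)
qed

theorem lemma8p9:
  fixes Nd :: "nat \<Rightarrow> real \<Rightarrow> real"
    and r0 :: "real \<Rightarrow> real"
    and c :: real and \<Lambda> :: complex
    and V V1 V2 :: "real \<Rightarrow> complex"
  assumes smooth: "\<And>k s. s \<ge> 0 \<Longrightarrow>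
             (Nd k has_real_derivative Nd (Suc k) s) (at s within {0..})"
    and N_dec: "\<And>s. s > 0 \<Longrightarrow> Nd 1 s < 0"
    and N0: "Nd 0 0 = 1" and N1: "Nd 0 1 = 0"
    and N_inf: "(\<exists>L<0. (Nd 0 \<longlongrightarrow> L) at_top) \<or> filterlim (Nd 0) at_bot at_top"
    and N_concave: "\<And>s. s \<in> {0..1} \<Longrightarrow> Nd 2 s \<le> 0"
    and c: "0 \<le> c" "c < 1"
    and Lam: "Re \<Lambda> > 0"
    and r0_ode: "\<And>X. (r0 has_real_derivative r0 X * Nd 0 ((r0 X)^2)) (at X)"
    and r0_init: "r0 0 = 1/2"
    and V_meas: "V \<in> borel_measurable lborel"
    and V_L2: "integrable lborel (\<lambda>X. (norm (V X))^2)"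
    and V_d1: "\<And>X. (V has_vector_derivative V1 X) (at X)"
    and V_d2: "\<And>X. (V1 has_vector_derivative V2 X) (at X)"
    and V_eq: "\<And>X. let N\<^sub>0 = (\<lambda>Y. Nd 0 ((r0 Y)^2));
                        N\<^sub>p = (\<lambda>Y. Nd 1 ((r0 Y)^2) * (r0 Y)^2);
                        F = (\<lambda>Y. N\<^sub>0 Y + N\<^sub>p Y);
                        f = (\<lambda>Y. 2 * c * N\<^sub>p Y)
                    in V2 X = (complex_of_real ((F X)^2 - deriv F X)
                               + \<Lambda> * (\<Lambda> - complex_of_real (f X))) * V X"
  shows "\<forall>X. V X = 0"
proof
  \<comment> \<open>Only the sign of \<open>N'\<close> enters (through \<open>f \<le> 0\<close>).\<close>
  fix X
  define F where "F = (\<lambda>Y. Nd 0 ((r0 Y)^2) + Nd 1 ((r0 Y)^2) * (r0 Y)^2)"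
  define f where "f = (\<lambda>Y. 2 * c * (Nd 1 ((r0 Y)^2) * (r0 Y)^2))"
  have "(\<lambda>Y. Nd k ((r0 Y)^2)) differentiable (at Y)" for k Y
    using has_real_derivative_comp_square[OF smooth r0_ode] real_differentiable_def by fastforce
  moreover have "(\<lambda>Y. (r0 Y)^2) differentiable (at Y)" for Y
    using r0_ode real_differentiable_def by (fastforce intro!: derivative_intros)
  ultimately have F': "(F has_real_derivative deriv F Y) (at Y)" for Y
    unfolding F_def DERIV_deriv_iff_real_differentiable by (intro differentiable_add differentiable_mult)
  have f_nonpos: "f Y \<le> 0" for Y
  proof -
    have "Nd 1 ((r0 Y)^2) * (r0 Y)^2 \<le> 0"
      using N_dec[of "(r0 Y)^2"] by (cases "r0 Y = 0") (auto intro: mult_nonpos_nonneg)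
    then show ?thesis
      using c unfolding f_def by (simp add: mult_nonneg_nonpos)
  qed
  have equation: "V2 Y = (of_real ((F Y)^2 - deriv F Y) + \<Lambda> * (\<Lambda> - of_real (f Y))) * V Y" for Y
    using V_eq[of Y] unfolding F_def f_def Let_def .
  show "V X = 0"
    by (rule second_order_L2_solution_eq_0[OF V_d1 V_d2 F' equation f_nonpos Lam V_L2])
qed

end
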